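(* Let $\mathbb{X}\subseteq\mathbb{R}^{n_x}$, $\mathbb{U}\subseteq\mathbb{R}^{n_u}$ with $0<\mu_L(\mathbb{U})<\infty$ ($\mu_L$ = Lebesgue measure), let $T>0$ be an integer, let $p(x_0)$ be an initial density on $\mathbb{X}$ and $p(x_{t+1}\mid x_t,u_t)$, $t\in\{0,\dots,T-1\}$, transition densities, and let $c_t:\mathbb{X}\times\mathbb{U}\to\mathbb{R}_{\ge 0}$ ($t\in\{0,\dots,T-1\}$), $c_T:\mathbb{X}\to\mathbb{R}_{\ge 0}$. Let $p(\tau\mid\mathcal{O}_{0:T}=1)$ be the optimal trajectory density of control as inference, i.e. the density on trajectories $\tau=(x_{0:T},u_{0:T-1})$ satisfying $$p(\tau\mid\mathcal{O}_{0:T}=1)\propto p(x_0)\prod_{t=0}^{T-1}p(x_{t+1}\mid x_t,u_t)\,\exp\Big(-c_T(x_T)-\sum_{t=0}^{T-1}c_t(x_t,u_t)\Big).$$ For policies $\pi=\{\pi_t\}_{t=0}^{T-1}$, where each $\pi_t(\cdot\mid x)$ is a probability density on $\mathbb{U}$ for every $x\in\mathbb{X}$, let $p^\pi(\tau)=p(x_0)\prod_{t=0}^{T-1}p(x_{t+1}\mid x_t,u_t)\pi_t(u_t\mid x_t)$. Then for any $\eta>-1$, $\eta\neq 0$, minimizing the R\'enyi divergence $D_{1+\eta}(p^\pi\,\|\,p(\cdot\mid\mathcal{O}_{0:T}=1))$ with respect to $p^\pi$ of this form (i.e. with respect to $\{\pi_t\}$) is equivalent to the problem $$\underset{\{\pi_t\}_{t=0}^{T-1}}{\mathrm{minimize}}\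 \ \frac{1}{\eta}\log\mathbb{E}_{p^\pi(\tau)}\Big[\exp\Big(\eta c_T(x_T)+\eta\sum_{t=0}^{T-1}\big(c_t(x_t,u_t)+\log\pi_t(u_t\mid x_t)\big)\Big)\Big].$$
   Context: For densities $p_1,p_2$ and $\alpha>0$, $\alpha\ne1$, the R\'enyi divergence is $D_\alpha(p_1\|p_2)=\frac{1}{\alpha-1}\log\int_{\{p_1p_2>0\}}p_1(u)^\alpha p_2(u)^{1-\alpha}\,du$. In control as inference, binary optimality variables $\mathcal{O}_t$ satisfy $p(\mathcal{O}_t=1\mid x_t,u_t)=\exp(-c_t(x_t,u_t))$, $p(\mathcal{O}_T=1\mid x_T)=\exp(-c_T(x_T))$, and the control prior is uniform, $p(u_t)=1/\mu_L(\mathbb{U})$. "Equivalent" means the two minimization problems over $\{\pi_t\}$ have the same minimizers. *)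

theory Defs
  imports "HOL-Analysis.Analysis"
begin

definition elog :: "ennreal \<Rightarrow> ereal" where
  "elog v = (if v = 0 then -\<infinity> else if v = \<infinity> then \<infinity> else ereal (ln (enn2real v)))"

definition renyi :: "'a measure \<Rightarrow> real \<Rightarrow> ('a \<Rightarrow> real) \<Rightarrow> ('a \<Rightarrow> real) \<Rightarrow> ereal" where
  "renyi M \<alpha> p1 p2 = ereal (1 / (\<alpha> - 1)) *
     elog (\<integral>\<^sup>+ u. ennreal (p1 u powr \<alpha> * p2 u powr (1 - \<alpha>)) * indicator {v. p1 v * p2 v > 0} u \<partial>M)"

definition is_density :: "'a measure \<Rightarrow> ('a \<Rightarrow> real) \<Rightarrow> bool" where
  "is_density M f \<longleftrightarrow> f \<in> borel_measurable M \<and> (\<forall>x\<in>space M. 0 \<le> f x)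
     \<and> (\<integral>\<^sup>+ x. ennreal (f x) \<partial>M) = 1"

definition traj_M :: "'x::euclidean_space set \<Rightarrow> 'u::euclidean_space set \<Rightarrow> nat
    \<Rightarrow> ((nat \<Rightarrow> 'x) \<times> (nat \<Rightarrow> 'u)) measure" where
  "traj_M X U T = (\<Pi>\<^sub>M t\<in>{..T}. restrict_space lborel X) \<Otimes>\<^sub>M (\<Pi>\<^sub>M t\<in>{..<T}. restrict_space lborel U)"

definition dyn :: "('x \<Rightarrow> real) \<Rightarrow> (nat \<Rightarrow> 'x \<Rightarrow> 'u \<Rightarrow> 'x \<Rightarrow> real) \<Rightarrow> nat
    \<Rightarrow> (nat \<Rightarrow> 'x) \<times> (nat \<Rightarrow> 'u) \<Rightarrow> real" where
  "dyn p0 P T \<tau> = p0 (fst \<tau> 0) * (\<Prod>t<T. P t (fst \<tau> t) (snd \<tau> t) (fst \<tau> (Suc t)))"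

definition total_cost :: "(nat \<Rightarrow> 'x \<Rightarrow> 'u \<Rightarrow> real) \<Rightarrow> ('x \<Rightarrow> real) \<Rightarrow> nat
    \<Rightarrow> (nat \<Rightarrow> 'x) \<times> (nat \<Rightarrow> 'u) \<Rightarrow> real" where
  "total_cost c cT T \<tau> = cT (fst \<tau> T) + (\<Sum>t<T. c t (fst \<tau> t) (snd \<tau> t))"

definition p_pi :: "('x \<Rightarrow> real) \<Rightarrow> (nat \<Rightarrow> 'x \<Rightarrow> 'u \<Rightarrow> 'x \<Rightarrow> real) \<Rightarrow> (nat \<Rightarrow> 'x \<Rightarrow> 'u \<Rightarrow> real)
    \<Rightarrow> nat \<Rightarrow> (nat \<Rightarrow> 'x) \<times> (nat \<Rightarrow> 'u) \<Rightarrow> real" where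
  "p_pi p0 P \<pi> T \<tau> = dyn p0 P T \<tau> * (\<Prod>t<T. \<pi> t (fst \<tau> t) (snd \<tau> t))"

text \<open>Joint p(tau, O_{0:T}=1) with uniform control prior 1/mu_L(U).\<close>
definition joint_opt :: "'u::euclidean_space set \<Rightarrow> ('x \<Rightarrow> real) \<Rightarrow> (nat \<Rightarrow> 'x \<Rightarrow> 'u \<Rightarrow> 'x \<Rightarrow> real)
    \<Rightarrow> (nat \<Rightarrow> 'x \<Rightarrow> 'u \<Rightarrow> real) \<Rightarrow> ('x \<Rightarrow> real) \<Rightarrow> nat \<Rightarrow> (nat \<Rightarrow> 'x) \<times> (nat \<Rightarrow> 'u) \<Rightarrow> real" where
  "joint_opt U p0 P c cT T \<tau> =
     dyn p0 P T \<tau> * (1 / measure lborel U) ^ T * exp (- total_cost c cT T \<tau>)"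

definition p_opt :: "'x::euclidean_space set \<Rightarrow> 'u::euclidean_space set \<Rightarrow> ('x \<Rightarrow> real)
    \<Rightarrow> (nat \<Rightarrow> 'x \<Rightarrow> 'u \<Rightarrow> 'x \<Rightarrow> real) \<Rightarrow> (nat \<Rightarrow> 'x \<Rightarrow> 'u \<Rightarrow> real) \<Rightarrow> ('x \<Rightarrow> real) \<Rightarrow> nat
    \<Rightarrow> (nat \<Rightarrow> 'x) \<times> (nat \<Rightarrow> 'u) \<Rightarrow> real" where
  "p_opt X U p0 P c cT T \<tau> = joint_opt U p0 P c cT T \<tau> /
     enn2real (\<integral>\<^sup>+ \<sigma>. ennreal (joint_opt U p0 P c cT T \<sigma>) \<partial>traj_M X U T)"

definition policies :: "'x::euclidean_space set \<Rightarrow> 'u::euclidean_space set \<Rightarrow> nat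
    \<Rightarrow> (nat \<Rightarrow> 'x \<Rightarrow> 'u \<Rightarrow> real) set" where
  "policies X U T = {\<pi>. \<forall>t<T.
      (\<lambda>(x, u). \<pi> t x u) \<in> borel_measurable (restrict_space lborel X \<Otimes>\<^sub>M restrict_space lborel U)
      \<and> (\<forall>x\<in>X. is_density (restrict_space lborel U) (\<pi> t x))}"

definition rs_objective :: "'x::euclidean_space set \<Rightarrow> 'u::euclidean_space set \<Rightarrow> ('x \<Rightarrow> real)
    \<Rightarrow> (nat \<Rightarrow> 'x \<Rightarrow> 'u \<Rightarrow> 'x \<Rightarrow> real) \<Rightarrow> (nat \<Rightarrow> 'x \<Rightarrow> 'u \<Rightarrow> real) \<Rightarrow> ('x \<Rightarrow> real) \<Rightarrow> nat
    \<Rightarrow> real \<Rightarrow> (nat \<Rightarrow> 'x \<Rightarrow> 'u \<Rightarrow> real) \<Rightarrow> ereal" where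
  "rs_objective X U p0 P c cT T \<eta> \<pi> = ereal (1 / \<eta>) *
     elog (\<integral>\<^sup>+ \<tau>. ennreal (p_pi p0 P \<pi> T \<tau> *
       exp (\<eta> * cT (fst \<tau> T) + \<eta> * (\<Sum>t<T. c t (fst \<tau> t) (snd \<tau> t) + ln (\<pi> t (fst \<tau> t) (snd \<tau> t)))))
       \<partial>traj_M X U T)"

end

theory Submission
  imports Defs
begin

text \<open>The policy density and the posterior share the dynamics factor
  \<open>p(x\<^sub>0) \<Prod>\<^sub>t p(x\<^sub>t\<^sub>+\<^sub>1 | x\<^sub>t, u\<^sub>t)\<close>. On the support of \<open>p\<^sup>\<pi>\<close> their ratio is therefore
  \<open>Z \<mu>\<^sub>L(U)\<^sup>T exp (c\<^sub>T + \<Sum>\<^sub>t (c\<^sub>t + log \<pi>\<^sub>t))\<close>, with \<open>Z\<close> the normaliser of the posterior, so the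
  Renyi integrand \<open>p\<^sup>\<pi> (p\<^sup>\<pi> / p(\<tau> | O))\<^sup>\<eta>\<close> is the constant \<open>(Z \<mu>\<^sub>L(U)\<^sup>T)\<^sup>\<eta>\<close> times the integrand
  of the risk-sensitive objective. Taking logarithms, the Renyi divergence equals
  \<open>log (Z \<mu>\<^sub>L(U)\<^sup>T)\<close> plus the risk-sensitive objective for every policy. The constant is finite
  because the costs are nonnegative and the dynamics factor integrates to \<open>\<mu>\<^sub>L(U)\<^sup>T\<close>
  (integrate out one transition density after the other), and nonzero because the dynamics
  factor is not almost everywhere zero.\<close>

lemma product_sigma_finite_const:
  "sigma_finite_measure M \<Longrightarrow> product_sigma_finite (\<lambda>_. M)"
  unfolding product_sigma_finite_def by blast

lemma sigma_finite_PiM_const: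
  assumes "sigma_finite_measure M" and "finite I"
  shows "sigma_finite_measure (\<Pi>\<^sub>M i\<in>I. M)"
proof -
  interpret product_sigma_finite "\<lambda>_. M"
    using product_sigma_finite_const[OF assms(1)] .
  interpret finite_product_sigma_finite "\<lambda>_. M" I
    by unfold_locales (rule assms(2))
  show ?thesis ..
qed

lemma elog_mult: "0 < k \<Longrightarrow> elog (ennreal k * I) = ereal (ln k) + elog I"
  by (cases I rule: ennreal_cases) (auto simp: elog_def ennreal_mult'[symmetric] ennreal_mult_top ln_mult)

lemma powr_mult_ratio_powr:
  fixes a b \<eta> :: real
  assumes "0 < a" and "0 < b"
  shows "a powr (1 + \<eta>) * b powr (1 - (1 + \<eta>)) = a * (a / b) powr \<eta>"
  using assms by (simp add: powr_add powr_minus powr_divide divide_simps)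

subsection \<open>Trajectories\<close>

lemma space_traj_M:
  "\<tau> \<in> space (traj_M X U T) \<Longrightarrow> (\<forall>t\<le>T. fst \<tau> t \<in> X) \<and> (\<forall>t<T. snd \<tau> t \<in> U)"
  unfolding traj_M_def
  by (auto simp: space_pair_measure space_PiM space_restrict_space PiE_def Pi_def)

lemma measurable_traj_state:
  "t \<le> T \<Longrightarrow> (\<lambda>\<tau>. fst \<tau> t) \<in> measurable (traj_M X U T) (restrict_space lborel X)"
  unfolding traj_M_def
  by (rule measurable_compose[OF measurable_fst measurable_component_singleton]) auto

lemma measurable_traj_control:
  "t < T \<Longrightarrow> (\<lambda>\<tau>. snd \<tau> t) \<in> measurable (traj_M X U T) (restrict_space lborel U)"
  unfolding traj_M_def
  by (rule measurable_compose[OF measurable_snd measurable_component_singleton]) auto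

lemma borel_measurable_traj_stage:
  assumes "(\<lambda>(x, u). f x u) \<in> borel_measurable (restrict_space lborel X \<Otimes>\<^sub>M restrict_space lborel U)"
    and "t < T"
  shows "(\<lambda>\<tau>. f (fst \<tau> t) (snd \<tau> t)) \<in> borel_measurable (traj_M X U T)"
proof -
  have "(\<lambda>\<tau>. (fst \<tau> t, snd \<tau> t))
      \<in> measurable (traj_M X U T) (restrict_space lborel X \<Otimes>\<^sub>M restrict_space lborel U)"
    using assms(2) by (intro measurable_Pair measurable_traj_state measurable_traj_control) auto
  from measurable_comp[OF this assms(1)] show ?thesis by (simp add: comp_def)
qed

lemma borel_measurable_traj_transition:
  assumes "(\<lambda>((x, u), y). f x u y) \<in> borel_measurable
      ((restrict_space lborel X \<Otimes>\<^sub>M restrict_space lborel U) \<Otimes>\<^sub>M restrict_space lborel X)"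
    and "t < T"
  shows "(\<lambda>\<tau>. f (fst \<tau> t) (snd \<tau> t) (fst \<tau> (Suc t))) \<in> borel_measurable (traj_M X U T)"
proof -
  have "(\<lambda>\<tau>. ((fst \<tau> t, snd \<tau> t), fst \<tau> (Suc t))) \<in> measurable (traj_M X U T)
      ((restrict_space lborel X \<Otimes>\<^sub>M restrict_space lborel U) \<Otimes>\<^sub>M restrict_space lborel X)"
    using assms(2) by (intro measurable_Pair measurable_traj_state measurable_traj_control) auto
  from measurable_comp[OF this assms(1)] show ?thesis by (simp add: comp_def)
qed

lemma policy_measurable_traj:
  "\<pi> \<in> policies X U T \<Longrightarrow> t < T \<Longrightarrow> (\<lambda>\<tau>. \<pi> t (fst \<tau> t) (snd \<tau> t)) \<in> borel_measurable (traj_M X U T)"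
  by (rule borel_measurable_traj_stage) (auto simp: policies_def)

lemma policy_nonneg_traj:
  "\<pi> \<in> policies X U T \<Longrightarrow> t < T \<Longrightarrow> \<tau> \<in> space (traj_M X U T) \<Longrightarrow> 0 \<le> \<pi> t (fst \<tau> t) (snd \<tau> t)"
  using space_traj_M[of \<tau> X U T] by (auto simp: policies_def is_density_def space_restrict_space)

lemma dyn_fun_upd:
  "dyn p0 P (Suc n) (xs(Suc n := y), us(n := v)) = dyn p0 P n (xs, us) * P n (xs n) v y"
proof -
  have "(\<Prod>t<n. P t ((xs(Suc n := y)) t) ((us(n := v)) t) ((xs(Suc n := y)) (Suc t)))
      = (\<Prod>t<n. P t (xs t) (us t) (xs (Suc t)))"
    by (rule prod.cong) auto
  then show ?thesis unfolding dyn_def by (simp add: mult.assoc)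
qed

subsection \<open>The dynamics factor\<close>

locale controlled_dynamics =
  fixes X :: "'x::euclidean_space set" and U :: "'u::euclidean_space set" and T :: nat
    and p0 :: "'x \<Rightarrow> real" and P :: "nat \<Rightarrow> 'x \<Rightarrow> 'u \<Rightarrow> 'x \<Rightarrow> real"
  assumes X_borel: "X \<in> sets lborel" and U_borel: "U \<in> sets lborel"
    and p0_dens: "is_density (restrict_space lborel X) p0"
    and P_meas: "\<forall>t<T. (\<lambda>((x, u), y). P t x u y) \<in> borel_measurable
        ((restrict_space lborel X \<Otimes>\<^sub>M restrict_space lborel U) \<Otimes>\<^sub>M restrict_space lborel X)"
    and P_dens: "\<forall>t<T. \<forall>x\<in>X. \<forall>u\<in>U. is_density (restrict_space lborel X) (P t x u)"
begin

abbreviation "state_space \<equiv> restrict_space lborel X"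
abbreviation "control_space \<equiv> restrict_space lborel U"
abbreviation "state_paths (n::nat) \<equiv> \<Pi>\<^sub>M t\<in>{..n}. state_space"
abbreviation "control_paths (n::nat) \<equiv> \<Pi>\<^sub>M t\<in>{..<n}. control_space"

lemma traj_M_eq: "traj_M X U n = state_paths n \<Otimes>\<^sub>M control_paths n"
  unfolding traj_M_def ..

lemma sigma_finite_state_space: "sigma_finite_measure state_space"
  by (rule sigma_finite_measure_restrict_space[OF sigma_finite_lborel X_borel])

lemma sigma_finite_control_space: "sigma_finite_measure control_space"
  by (rule sigma_finite_measure_restrict_space[OF sigma_finite_lborel U_borel])

lemma sigma_finite_control_paths: "sigma_finite_measure (control_paths n)"
  by (rule sigma_finite_PiM_const[OF sigma_finite_control_space]) simp

lemma dyn_measurable: "n \<le> T \<Longrightarrow> dyn p0 P n \<in> borel_measurable (traj_M X U n)"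
proof -
  assume "n \<le> T"
  have "(\<lambda>\<tau>. p0 (fst \<tau> 0)) \<in> borel_measurable (traj_M X U n)"
    using p0_dens by (intro measurable_compose[OF measurable_traj_state]) (auto simp: is_density_def)
  moreover have "(\<lambda>\<tau>. \<Prod>t<n. P t (fst \<tau> t) (snd \<tau> t) (fst \<tau> (Suc t))) \<in> borel_measurable (traj_M X U n)"
    using P_meas \<open>n \<le> T\<close> by (intro borel_measurable_prod borel_measurable_traj_transition) auto
  ultimately show ?thesis unfolding dyn_def[abs_def] by (rule borel_measurable_times)
qed

lemma dyn_nonneg: "n \<le> T \<Longrightarrow> \<tau> \<in> space (traj_M X U n) \<Longrightarrow> 0 \<le> dyn p0 P n \<tau>"
  using p0_dens P_dens space_traj_M[of \<tau> X U n] unfolding dyn_def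
  by (intro mult_nonneg_nonneg prod_nonneg) (auto simp: is_density_def space_restrict_space)

lemma transition_measurable_section:
  assumes "t < T" and "x \<in> X"
  shows "(\<lambda>(y, v). ennreal (P t x v y)) \<in> borel_measurable (state_space \<Otimes>\<^sub>M control_space)"
proof -
  have "(\<lambda>(y, v). ((x, v), y))
      \<in> measurable (state_space \<Otimes>\<^sub>M control_space) ((state_space \<Otimes>\<^sub>M control_space) \<Otimes>\<^sub>M state_space)"
    using assms(2) by (auto simp: space_restrict_space)
  from measurable_comp[OF this P_meas[rule_format, OF assms(1)]]
  have "(\<lambda>(y, v). P t x v y) \<in> borel_measurable (state_space \<Otimes>\<^sub>M control_space)"
    by (simp add: comp_def case_prod_unfold)
  then show ?thesis by measurable
qed

lemma nn_integral_transition: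
  assumes "t < T" and "x \<in> X"
  shows "(\<integral>\<^sup>+y. \<integral>\<^sup>+v. ennreal (P t x v y) \<partial>control_space \<partial>state_space) = emeasure lborel U"
proof -
  interpret pair_sigma_finite state_space control_space
    using sigma_finite_state_space sigma_finite_control_space by (simp add: pair_sigma_finite_def)
  have "(\<integral>\<^sup>+y. \<integral>\<^sup>+v. ennreal (P t x v y) \<partial>control_space \<partial>state_space)
      = (\<integral>\<^sup>+v. \<integral>\<^sup>+y. ennreal (P t x v y) \<partial>state_space \<partial>control_space)"
    using Fubini[OF transition_measurable_section[OF assms]] by simp
  also have "\<dots> = (\<integral>\<^sup>+v. 1 \<partial>control_space)"
    using P_dens assms by (intro nn_integral_cong) (auto simp: is_density_def space_restrict_space)
  also have "\<dots> = emeasure lborel U"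
    using U_borel by (simp add: emeasure_restrict_space space_restrict_space)
  finally show ?thesis .
qed

lemma nn_integral_dyn_Suc_controls:
  assumes "n < T" and xs: "xs \<in> space (state_paths n)" and y: "y \<in> X"
  shows "(\<integral>\<^sup>+us. ennreal (dyn p0 P (Suc n) (xs(Suc n := y), us)) \<partial>control_paths (Suc n))
    = (\<integral>\<^sup>+us. ennreal (dyn p0 P n (xs, us)) \<partial>control_paths n)
      * (\<integral>\<^sup>+v. ennreal (P n (xs n) v y) \<partial>control_space)"
proof -
  interpret product_sigma_finite "\<lambda>_. control_space"
    using product_sigma_finite_const[OF sigma_finite_control_space] .
  have dyn_Suc: "(\<lambda>\<tau>. ennreal (dyn p0 P (Suc n) \<tau>))
      \<in> borel_measurable (state_paths (Suc n) \<Otimes>\<^sub>M control_paths (Suc n))"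
    using dyn_measurable[of "Suc n"] assms(1) by (simp add: traj_M_eq)
  have dyn_n: "(\<lambda>\<tau>. ennreal (dyn p0 P n \<tau>)) \<in> borel_measurable (state_paths n \<Otimes>\<^sub>M control_paths n)"
    using dyn_measurable[of n] assms(1) by (simp add: traj_M_eq)
  have P_section: "(\<lambda>v. ennreal (P n (xs n) v y)) \<in> borel_measurable control_space"
    using measurable_Pair2[OF transition_measurable_section[OF assms(1)], of "xs n" y] xs y
    by (auto simp: space_restrict_space space_PiM)
  have xs': "xs(Suc n := y) \<in> space (state_paths (Suc n))"
    using xs y by (auto simp: space_PiM space_restrict_space PiE_def extensional_def Pi_def)
  have "(\<integral>\<^sup>+us. ennreal (dyn p0 P (Suc n) (xs(Suc n := y), us)) \<partial>control_paths (Suc n))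
      = (\<integral>\<^sup>+us. \<integral>\<^sup>+v. ennreal (dyn p0 P (Suc n) (xs(Suc n := y), us(n := v)))
          \<partial>control_space \<partial>control_paths n)"
    unfolding lessThan_Suc
    by (rule product_nn_integral_insert)
      (auto intro: measurable_Pair2[OF dyn_Suc xs', simplified lessThan_Suc])
  also have "\<dots> = (\<integral>\<^sup>+us. \<integral>\<^sup>+v. ennreal (dyn p0 P n (xs, us)) * ennreal (P n (xs n) v y)
      \<partial>control_space \<partial>control_paths n)"
  proof (intro nn_integral_cong)
    fix us v assume "us \<in> space (control_paths n)"
    then have "0 \<le> dyn p0 P n (xs, us)"
      using xs assms(1) by (intro dyn_nonneg) (auto simp: traj_M_eq space_pair_measure)
    then show "ennreal (dyn p0 P (Suc n) (xs(Suc n := y), us(n := v)))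
        = ennreal (dyn p0 P n (xs, us)) * ennreal (P n (xs n) v y)"
      by (simp add: dyn_fun_upd ennreal_mult')
  qed
  also have "\<dots> = (\<integral>\<^sup>+us. ennreal (dyn p0 P n (xs, us)) * (\<integral>\<^sup>+v. ennreal (P n (xs n) v y) \<partial>control_space)
      \<partial>control_paths n)"
    using P_section by (intro nn_integral_cong nn_integral_cmult)
  also have "\<dots> = (\<integral>\<^sup>+us. ennreal (dyn p0 P n (xs, us)) \<partial>control_paths n)
      * (\<integral>\<^sup>+v. ennreal (P n (xs n) v y) \<partial>control_space)"
    by (rule nn_integral_multc) (use measurable_Pair2[OF dyn_n] xs in auto)
  finally show ?thesis .
qed

lemma nn_integral_dyn_Suc_last_state:
  assumes "n < T" and xs: "xs \<in> space (state_paths n)"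
  shows "(\<integral>\<^sup>+y. \<integral>\<^sup>+us. ennreal (dyn p0 P (Suc n) (xs(Suc n := y), us)) \<partial>control_paths (Suc n) \<partial>state_space)
    = (\<integral>\<^sup>+us. ennreal (dyn p0 P n (xs, us)) \<partial>control_paths n) * emeasure lborel U"
proof -
  have xs_n: "xs n \<in> X" using xs by (auto simp: space_PiM space_restrict_space)
  have "(\<integral>\<^sup>+y. \<integral>\<^sup>+us. ennreal (dyn p0 P (Suc n) (xs(Suc n := y), us)) \<partial>control_paths (Suc n) \<partial>state_space)
      = (\<integral>\<^sup>+y. (\<integral>\<^sup>+us. ennreal (dyn p0 P n (xs, us)) \<partial>control_paths n)
          * (\<integral>\<^sup>+v. ennreal (P n (xs n) v y) \<partial>control_space) \<partial>state_space)"
    using nn_integral_dyn_Suc_controls[OF assms] by (intro nn_integral_cong) (simp add: space_restrict_space)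
  also have "\<dots> = (\<integral>\<^sup>+us. ennreal (dyn p0 P n (xs, us)) \<partial>control_paths n)
      * (\<integral>\<^sup>+y. \<integral>\<^sup>+v. ennreal (P n (xs n) v y) \<partial>control_space \<partial>state_space)"
    by (rule nn_integral_cmult) (rule sigma_finite_measure.borel_measurable_nn_integral_fst
        [OF sigma_finite_control_space transition_measurable_section[OF assms(1) xs_n], simplified])
  finally show ?thesis using nn_integral_transition[OF assms(1) xs_n] by simp
qed

lemma nn_integral_dyn:
  "n \<le> T \<Longrightarrow> (\<integral>\<^sup>+\<tau>. ennreal (dyn p0 P n \<tau>) \<partial>traj_M X U n) = emeasure lborel U ^ n"
proof (induction n)
  case 0
  interpret product_sigma_finite "\<lambda>_. state_space"
    using product_sigma_finite_const[OF sigma_finite_state_space] .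
  have p0_meas: "p0 \<in> borel_measurable state_space"
    using p0_dens by (simp add: is_density_def)
  have "(\<integral>\<^sup>+\<tau>. ennreal (dyn p0 P 0 \<tau>) \<partial>traj_M X U 0)
      = (\<integral>\<^sup>+\<tau>. ennreal (p0 (fst \<tau> 0)) \<partial>state_paths 0 \<Otimes>\<^sub>M count_space {\<lambda>_::nat. undefined::'u})"
    by (simp add: traj_M_def PiM_empty dyn_def)
  also have "\<dots> = (\<integral>\<^sup>+xs. ennreal (p0 (xs 0)) \<partial>state_paths 0)"
  proof (subst sigma_finite_measure.nn_integral_fst[symmetric])
    show "(\<lambda>\<tau>. ennreal (p0 (fst \<tau> 0)))
        \<in> borel_measurable (state_paths 0 \<Otimes>\<^sub>M count_space {\<lambda>_::nat. undefined::'u})"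
      using p0_meas by measurable
  qed (auto intro!: sigma_finite_measure_count_space_finite simp: nn_integral_count_space_finite)
  also have "\<dots> = (\<integral>\<^sup>+x. ennreal (p0 x) \<partial>state_space)"
    unfolding atMost_0 by (rule product_nn_integral_singleton) (use p0_meas in measurable)
  also have "\<dots> = 1" using p0_dens by (simp add: is_density_def)
  finally show ?case by simp
next
  case (Suc n)
  interpret product_sigma_finite "\<lambda>_. state_space"
    using product_sigma_finite_const[OF sigma_finite_state_space] .
  have dyn_Suc: "(\<lambda>\<tau>. ennreal (dyn p0 P (Suc n) \<tau>))
      \<in> borel_measurable (state_paths (Suc n) \<Otimes>\<^sub>M control_paths (Suc n))"
    using dyn_measurable[of "Suc n"] Suc.prems by (simp add: traj_M_eq)
  have dyn_n: "(\<lambda>\<tau>. ennreal (dyn p0 P n \<tau>)) \<in> borel_measurable (state_paths n \<Otimes>\<^sub>M control_paths n)"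
    using dyn_measurable[of n] Suc.prems by (simp add: traj_M_eq)
  note fst_fubini = sigma_finite_measure.nn_integral_fst[OF sigma_finite_control_paths]
  note fst_measurable = sigma_finite_measure.borel_measurable_nn_integral_fst[OF sigma_finite_control_paths]
  have "(\<integral>\<^sup>+\<tau>. ennreal (dyn p0 P (Suc n) \<tau>) \<partial>traj_M X U (Suc n))
      = (\<integral>\<^sup>+xs. \<integral>\<^sup>+us. ennreal (dyn p0 P (Suc n) (xs, us)) \<partial>control_paths (Suc n) \<partial>state_paths (Suc n))"
    by (simp add: traj_M_eq fst_fubini[OF dyn_Suc])
  also have "\<dots> = (\<integral>\<^sup>+xs. \<integral>\<^sup>+y. \<integral>\<^sup>+us. ennreal (dyn p0 P (Suc n) (xs(Suc n := y), us))
      \<partial>control_paths (Suc n) \<partial>state_space \<partial>state_paths n)"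
    unfolding atMost_Suc
    by (rule product_nn_integral_insert) (use fst_measurable[OF dyn_Suc] in \<open>auto simp: atMost_Suc\<close>)
  also have "\<dots> = (\<integral>\<^sup>+xs. (\<integral>\<^sup>+us. ennreal (dyn p0 P n (xs, us)) \<partial>control_paths n) * emeasure lborel U
      \<partial>state_paths n)"
    using Suc.prems by (intro nn_integral_cong nn_integral_dyn_Suc_last_state) auto
  also have "\<dots> = (\<integral>\<^sup>+\<tau>. ennreal (dyn p0 P n \<tau>) \<partial>traj_M X U n) * emeasure lborel U"
    by (simp add: nn_integral_multc fst_measurable[OF dyn_n] traj_M_eq fst_fubini[OF dyn_n])
  finally show ?case using Suc by (simp add: mult.commute)
qed

end

subsection \<open>The posterior and the Renyi divergence\<close>

locale control_as_inference = controlled_dynamics X U T p0 P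
  for X :: "'x::euclidean_space set" and U :: "'u::euclidean_space set" and T p0 P +
  fixes c :: "nat \<Rightarrow> 'x \<Rightarrow> 'u \<Rightarrow> real" and cT :: "'x \<Rightarrow> real"
  assumes U_pos: "0 < emeasure lborel U" and U_fin: "emeasure lborel U < \<infinity>"
    and c_meas: "\<forall>t<T. (\<lambda>(x, u). c t x u) \<in> borel_measurable
        (restrict_space lborel X \<Otimes>\<^sub>M restrict_space lborel U)"
    and c_nonneg: "\<forall>t<T. \<forall>x\<in>X. \<forall>u\<in>U. 0 \<le> c t x u"
    and cT_meas: "cT \<in> borel_measurable (restrict_space lborel X)"
    and cT_nonneg: "\<forall>x\<in>X. 0 \<le> cT x"
begin

abbreviation "\<mu> \<equiv> measure lborel U"

lemma emeasure_U: "emeasure lborel U = ennreal \<mu>"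
  using U_fin by (intro emeasure_eq_ennreal_measure) auto

lemma measure_U_pos: "0 < \<mu>"
  using U_pos emeasure_U by simp

lemma total_cost_measurable: "total_cost c cT T \<in> borel_measurable (traj_M X U T)"
proof -
  have "(\<lambda>\<tau>. cT (fst \<tau> T)) \<in> borel_measurable (traj_M X U T)"
    by (rule measurable_compose[OF measurable_traj_state cT_meas]) simp
  moreover have "(\<lambda>\<tau>. \<Sum>t<T. c t (fst \<tau> t) (snd \<tau> t)) \<in> borel_measurable (traj_M X U T)"
    using c_meas by (intro borel_measurable_sum borel_measurable_traj_stage) auto
  ultimately show ?thesis unfolding total_cost_def[abs_def] by (rule borel_measurable_add)
qed

lemma total_cost_nonneg: "\<tau> \<in> space (traj_M X U T) \<Longrightarrow> 0 \<le> total_cost c cT T \<tau>"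
  using space_traj_M[of \<tau> X U T] c_nonneg cT_nonneg unfolding total_cost_def
  by (intro add_nonneg_nonneg sum_nonneg) auto

lemma joint_opt_measurable: "joint_opt U p0 P c cT T \<in> borel_measurable (traj_M X U T)"
  unfolding joint_opt_def[abs_def] using dyn_measurable[of T] total_cost_measurable by measurable

lemma ennreal_joint_opt_eq_0_iff:
  "ennreal (joint_opt U p0 P c cT T \<tau>) = 0 \<longleftrightarrow> ennreal (dyn p0 P T \<tau>) = 0"
proof -
  have "0 < (1 / \<mu>) ^ T" using measure_U_pos by simp
  then show ?thesis by (auto simp: joint_opt_def ennreal_eq_0_iff mult_le_0_iff)
qed

lemma nn_integral_joint_opt_le_1: "(\<integral>\<^sup>+\<tau>. ennreal (joint_opt U p0 P c cT T \<tau>) \<partial>traj_M X U T) \<le> 1"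
proof -
  have "(\<integral>\<^sup>+\<tau>. ennreal (joint_opt U p0 P c cT T \<tau>) \<partial>traj_M X U T)
      \<le> (\<integral>\<^sup>+\<tau>. ennreal (dyn p0 P T \<tau>) * ennreal ((1 / \<mu>) ^ T) \<partial>traj_M X U T)"
  proof (rule nn_integral_mono)
    fix \<tau> assume \<tau>: "\<tau> \<in> space (traj_M X U T)"
    have "joint_opt U p0 P c cT T \<tau> \<le> dyn p0 P T \<tau> * (1 / \<mu>) ^ T"
      unfolding joint_opt_def using dyn_nonneg[OF order.refl \<tau>] total_cost_nonneg[OF \<tau>] measure_U_pos
      by (intro mult_left_le) auto
    then show "ennreal (joint_opt U p0 P c cT T \<tau>) \<le> ennreal (dyn p0 P T \<tau>) * ennreal ((1 / \<mu>) ^ T)"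
      using measure_U_pos by (simp add: ennreal_leI ennreal_mult''[symmetric])
  qed
  also have "\<dots> = ennreal (\<mu> ^ T) * ennreal ((1 / \<mu>) ^ T)"
    using dyn_measurable[of T] nn_integral_dyn[of T] emeasure_U measure_U_pos
    by (simp add: nn_integral_multc ennreal_power)
  also have "\<dots> = 1"
    using measure_U_pos by (simp add: ennreal_mult''[symmetric] power_one_over)
  finally show ?thesis .
qed

lemma nn_integral_joint_opt_nonzero: "(\<integral>\<^sup>+\<tau>. ennreal (joint_opt U p0 P c cT T \<tau>) \<partial>traj_M X U T) \<noteq> 0"
proof
  assume "(\<integral>\<^sup>+\<tau>. ennreal (joint_opt U p0 P c cT T \<tau>) \<partial>traj_M X U T) = 0"
  then have "AE \<tau> in traj_M X U T. ennreal (joint_opt U p0 P c cT T \<tau>) = 0"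
    using joint_opt_measurable by (simp add: nn_integral_0_iff_AE)
  then have "AE \<tau> in traj_M X U T. ennreal (dyn p0 P T \<tau>) = 0"
    by (simp add: ennreal_joint_opt_eq_0_iff)
  then have "(\<integral>\<^sup>+\<tau>. ennreal (dyn p0 P T \<tau>) \<partial>traj_M X U T) = 0"
    using dyn_measurable[of T] by (simp add: nn_integral_0_iff_AE)
  then show False
    using nn_integral_dyn[of T] U_pos by simp
qed

definition evidence :: real
  where "evidence = enn2real (\<integral>\<^sup>+\<tau>. ennreal (joint_opt U p0 P c cT T \<tau>) \<partial>traj_M X U T)"

lemma evidence_pos: "0 < evidence"
  using nn_integral_joint_opt_le_1 nn_integral_joint_opt_nonzero unfolding evidence_def
  by (metis enn2real_positive_iff ennreal_one_less_top order_le_less_trans not_gr_zero)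

lemma p_opt_eq: "p_opt X U p0 P c cT T \<tau> = joint_opt U p0 P c cT T \<tau> / evidence"
  unfolding p_opt_def evidence_def ..

definition rs_integrand :: "real \<Rightarrow> (nat \<Rightarrow> 'x \<Rightarrow> 'u \<Rightarrow> real) \<Rightarrow> (nat \<Rightarrow> 'x) \<times> (nat \<Rightarrow> 'u) \<Rightarrow> real"
  where "rs_integrand \<eta> \<pi> \<tau> = p_pi p0 P \<pi> T \<tau> *
     exp (\<eta> * cT (fst \<tau> T) + \<eta> * (\<Sum>t<T. c t (fst \<tau> t) (snd \<tau> t) + ln (\<pi> t (fst \<tau> t) (snd \<tau> t))))"

lemma rs_objective_eq:
  "rs_objective X U p0 P c cT T \<eta> \<pi>
    = ereal (1 / \<eta>) * elog (\<integral>\<^sup>+\<tau>. ennreal (rs_integrand \<eta> \<pi> \<tau>) \<partial>traj_M X U T)"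
  unfolding rs_objective_def rs_integrand_def ..

lemma rs_integrand_measurable:
  assumes "\<pi> \<in> policies X U T"
  shows "rs_integrand \<eta> \<pi> \<in> borel_measurable (traj_M X U T)"
proof -
  have "(\<lambda>\<tau>. c t (fst \<tau> t) (snd \<tau> t)) \<in> borel_measurable (traj_M X U T)" if "t < T" for t
    using c_meas that by (intro borel_measurable_traj_stage) auto
  then have "(\<lambda>\<tau>. \<Sum>t<T. c t (fst \<tau> t) (snd \<tau> t) + ln (\<pi> t (fst \<tau> t) (snd \<tau> t)))
      \<in> borel_measurable (traj_M X U T)"
    using policy_measurable_traj[OF assms]
    by (intro borel_measurable_sum borel_measurable_add borel_measurable_ln) auto
  moreover have "(\<lambda>\<tau>. cT (fst \<tau> T)) \<in> borel_measurable (traj_M X U T)"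
    by (rule measurable_compose[OF measurable_traj_state cT_meas]) simp
  moreover have "(\<lambda>\<tau>. \<Prod>t<T. \<pi> t (fst \<tau> t) (snd \<tau> t)) \<in> borel_measurable (traj_M X U T)"
    using policy_measurable_traj[OF assms] by (intro borel_measurable_prod) auto
  ultimately show ?thesis
    unfolding rs_integrand_def[abs_def] p_pi_def using dyn_measurable[of T] by measurable
qed

lemma p_pi_nonneg:
  "\<pi> \<in> policies X U T \<Longrightarrow> \<tau> \<in> space (traj_M X U T) \<Longrightarrow> 0 \<le> p_pi p0 P \<pi> T \<tau>"
  using dyn_nonneg[of T \<tau>] policy_nonneg_traj[of \<pi> X U T _ \<tau>] unfolding p_pi_def
  by (intro mult_nonneg_nonneg prod_nonneg) auto

lemma density_ratio_p_pi_p_opt: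
  assumes "\<pi> \<in> policies X U T" and "\<tau> \<in> space (traj_M X U T)" and "0 < p_pi p0 P \<pi> T \<tau>"
  shows "0 < p_opt X U p0 P c cT T \<tau>"
    and "p_pi p0 P \<pi> T \<tau> / p_opt X U p0 P c cT T \<tau>
      = evidence * \<mu> ^ T * exp (total_cost c cT T \<tau> + (\<Sum>t<T. ln (\<pi> t (fst \<tau> t) (snd \<tau> t))))"
proof -
  have dyn_pos: "0 < dyn p0 P T \<tau>" and "\<forall>t<T. 0 < \<pi> t (fst \<tau> t) (snd \<tau> t)"
    using assms dyn_nonneg[OF order.refl assms(2)] policy_nonneg_traj[OF assms(1) _ assms(2)]
    by (auto simp: p_pi_def zero_less_mult_iff less_le prod_zero_iff)
  then have prod_\<pi>: "(\<Prod>t<T. \<pi> t (fst \<tau> t) (snd \<tau> t)) = exp (\<Sum>t<T. ln (\<pi> t (fst \<tau> t) (snd \<tau> t)))"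
    by (simp add: exp_sum)
  show "0 < p_opt X U p0 P c cT T \<tau>"
    using dyn_pos measure_U_pos evidence_pos by (simp add: p_opt_eq joint_opt_def)
  show "p_pi p0 P \<pi> T \<tau> / p_opt X U p0 P c cT T \<tau>
      = evidence * \<mu> ^ T * exp (total_cost c cT T \<tau> + (\<Sum>t<T. ln (\<pi> t (fst \<tau> t) (snd \<tau> t))))"
    using dyn_pos measure_U_pos evidence_pos
    by (simp add: p_pi_def p_opt_eq joint_opt_def prod_\<pi> exp_add exp_minus power_one_over field_simps)
qed

lemma renyi_integrand_eq:
  assumes "\<pi> \<in> policies X U T" and "\<tau> \<in> space (traj_M X U T)"
  shows "ennreal (p_pi p0 P \<pi> T \<tau> powr (1 + \<eta>) * p_opt X U p0 P c cT T \<tau> powr (1 - (1 + \<eta>)))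
      * indicator {v. 0 < p_pi p0 P \<pi> T v * p_opt X U p0 P c cT T v} \<tau>
    = ennreal ((evidence * \<mu> ^ T) powr \<eta>) * ennreal (rs_integrand \<eta> \<pi> \<tau>)"
proof (cases "p_pi p0 P \<pi> T \<tau> = 0")
  case True
  then show ?thesis by (simp add: rs_integrand_def)
next
  case False
  then have pos: "0 < p_pi p0 P \<pi> T \<tau>"
    using p_pi_nonneg[OF assms] by simp
  note ratio = density_ratio_p_pi_p_opt[OF assms pos]
  have "p_pi p0 P \<pi> T \<tau> powr (1 + \<eta>) * p_opt X U p0 P c cT T \<tau> powr (1 - (1 + \<eta>))
      = p_pi p0 P \<pi> T \<tau> * (p_pi p0 P \<pi> T \<tau> / p_opt X U p0 P c cT T \<tau>) powr \<eta>"
    using pos ratio(1) by (rule powr_mult_ratio_powr)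
  also have "\<dots> = (evidence * \<mu> ^ T) powr \<eta> * p_pi p0 P \<pi> T \<tau>
      * exp (\<eta> * (total_cost c cT T \<tau> + (\<Sum>t<T. ln (\<pi> t (fst \<tau> t) (snd \<tau> t)))))"
    unfolding ratio(2) using evidence_pos measure_U_pos by (simp add: powr_mult exp_powr_real mult_ac)
  also have "\<dots> = (evidence * \<mu> ^ T) powr \<eta> * rs_integrand \<eta> \<pi> \<tau>"
    by (simp add: rs_integrand_def total_cost_def sum.distrib algebra_simps)
  finally have "p_pi p0 P \<pi> T \<tau> powr (1 + \<eta>) * p_opt X U p0 P c cT T \<tau> powr (1 - (1 + \<eta>))
      = (evidence * \<mu> ^ T) powr \<eta> * rs_integrand \<eta> \<pi> \<tau>" .
  then show ?thesis
    using pos ratio(1) evidence_pos measure_U_pos by (simp add: ennreal_mult'[symmetric])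
qed

lemma renyi_eq_rs_objective:
  assumes "\<pi> \<in> policies X U T" and "\<eta> \<noteq> 0"
  shows "renyi (traj_M X U T) (1 + \<eta>) (p_pi p0 P \<pi> T) (p_opt X U p0 P c cT T)
    = ereal (ln (evidence * \<mu> ^ T)) + rs_objective X U p0 P c cT T \<eta> \<pi>"
proof -
  let ?\<kappa> = "(evidence * \<mu> ^ T) powr \<eta>"
  have "renyi (traj_M X U T) (1 + \<eta>) (p_pi p0 P \<pi> T) (p_opt X U p0 P c cT T)
      = ereal (1 / \<eta>) * elog (\<integral>\<^sup>+\<tau>. ennreal ?\<kappa> * ennreal (rs_integrand \<eta> \<pi> \<tau>) \<partial>traj_M X U T)"
    unfolding renyi_def using renyi_integrand_eq[OF assms(1)] by (simp cong: nn_integral_cong)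
  also have "\<dots> = ereal (1 / \<eta>) * (ereal (ln ?\<kappa>) + elog (\<integral>\<^sup>+\<tau>. ennreal (rs_integrand \<eta> \<pi> \<tau>) \<partial>traj_M X U T))"
    using rs_integrand_measurable[OF assms(1)] evidence_pos measure_U_pos
    by (simp add: nn_integral_cmult elog_mult)
  also have "\<dots> = ereal (ln (evidence * \<mu> ^ T)) + rs_objective X U p0 P c cT T \<eta> \<pi>"
    using assms(2) by (simp add: ereal_distrib_left rs_objective_eq)
  finally show ?thesis .
qed

end

theorem theorem1:
  fixes X :: "'x::euclidean_space set" and U :: "'u::euclidean_space set" and T :: nat
    and p0 :: "'x \<Rightarrow> real" and P :: "nat \<Rightarrow> 'x \<Rightarrow> 'u \<Rightarrow> 'x \<Rightarrow> real"
    and c :: "nat \<Rightarrow> 'x \<Rightarrow> 'u \<Rightarrow> real" and cT :: "'x \<Rightarrow> real" and \<eta> :: real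
  assumes X_borel: "X \<in> sets lborel" and U_borel: "U \<in> sets lborel"
    and U_pos: "0 < emeasure lborel U" and U_fin: "emeasure lborel U < \<infinity>"
    and T_pos: "0 < T"
    and p0_dens: "is_density (restrict_space lborel X) p0"
    and P_meas: "\<forall>t<T. (\<lambda>((x, u), y). P t x u y) \<in> borel_measurable
        ((restrict_space lborel X \<Otimes>\<^sub>M restrict_space lborel U) \<Otimes>\<^sub>M restrict_space lborel X)"
    and P_dens: "\<forall>t<T. \<forall>x\<in>X. \<forall>u\<in>U. is_density (restrict_space lborel X) (P t x u)"
    and c_meas: "\<forall>t<T. (\<lambda>(x, u). c t x u) \<in> borel_measurable
        (restrict_space lborel X \<Otimes>\<^sub>M restrict_space lborel U)"
    and c_nonneg: "\<forall>t<T. \<forall>x\<in>X. \<forall>u\<in>U. 0 \<le> c t x u"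
    and cT_meas: "cT \<in> borel_measurable (restrict_space lborel X)"
    and cT_nonneg: "\<forall>x\<in>X. 0 \<le> cT x"
    and eta: "\<eta> > -1" "\<eta> \<noteq> 0"
  shows "\<forall>\<pi>\<in>policies X U T.
     (\<forall>\<pi>'\<in>policies X U T.
        renyi (traj_M X U T) (1 + \<eta>) (p_pi p0 P \<pi> T) (p_opt X U p0 P c cT T)
        \<le> renyi (traj_M X U T) (1 + \<eta>) (p_pi p0 P \<pi>' T) (p_opt X U p0 P c cT T))
     \<longleftrightarrow>
     (\<forall>\<pi>'\<in>policies X U T.
        rs_objective X U p0 P c cT T \<eta> \<pi> \<le> rs_objective X U p0 P c cT T \<eta> \<pi>')"
proof -
  interpret control_as_inference X U T p0 P c cT
    by unfold_locales (use assms in auto)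
  show ?thesis
    using renyi_eq_rs_objective[OF _ eta(2)] by (simp add: ereal_add_le_add_iff)
qed

end
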